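(* Let $n\ge4$ with $n\ne 6,10$. Then $\gamma_e(P_n)\ge\lceil (n+3)/2\rceil$.
   Context: $P_n$ is the path on $n$ vertices $[x_1,\dots,x_n]$ with edges $\{x_i,x_{i+1}\}$. In a finite simple graph $\Gamma=(V,E)$ with distance $d$, a vertex $v$ carrying a non-negative integer label $\ell$ dominates (covers) exactly the vertices $u$ with $d(u,v)=\ell$; a vertex labeled $0$ dominates only itself. An extended irregular dominating set is a set $S\subseteq V$ with a labeling $\lambda:S\to\mathbb{Z}_{\ge0}$ with distinct labels on distinct vertices, such that every vertex of $V$ is dominated by some vertex of $S$; some vertex of $S$ has label $0$. $\gamma_e(\Gamma)$ denotes the minimum cardinality of an extended irregular dominating set of $\Gamma$. *)

theory Defs
  imports Complex_Main "HOL-Library.Extended_Nat"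
begin

text \<open>A finite simple graph is given by a vertex set V and a set E of 2-element
  subsets of V (edges). Graph distance is the length of a shortest walk,
  infinite if no walk exists.\<close>

definition walk_of_length :: "'a set set \<Rightarrow> nat \<Rightarrow> 'a \<Rightarrow> 'a \<Rightarrow> bool" where
  "walk_of_length E k u v \<longleftrightarrow>
     (\<exists>p :: nat \<Rightarrow> 'a. p 0 = u \<and> p k = v \<and> (\<forall>i<k. {p i, p (Suc i)} \<in> E))"

definition gdist :: "'a set set \<Rightarrow> 'a \<Rightarrow> 'a \<Rightarrow> enat" where
  "gdist E u v = (INF k \<in> {k. walk_of_length E k u v}. enat k)"

definition dominates :: "'a set set \<Rightarrow> 'a \<Rightarrow> nat \<Rightarrow> 'a \<Rightarrow> bool" where
  "dominates E v l u \<longleftrightarrow> gdist E u v = enat l"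

definition ext_irr_dom_set :: "'a set \<Rightarrow> 'a set set \<Rightarrow> 'a set \<Rightarrow> ('a \<Rightarrow> nat) \<Rightarrow> bool" where
  "ext_irr_dom_set V E S lam \<longleftrightarrow>
     S \<subseteq> V \<and> inj_on lam S \<and>
     (\<forall>u\<in>V. \<exists>v\<in>S. dominates E v (lam v) u) \<and>
     (\<exists>v\<in>S. lam v = 0)"

definition gamma_e :: "'a set \<Rightarrow> 'a set set \<Rightarrow> nat" where
  "gamma_e V E = (LEAST k. \<exists>S lam. ext_irr_dom_set V E S lam \<and> card S = k)"

definition path_V :: "nat \<Rightarrow> nat set" where
  "path_V n = {1..n}"

definition path_E :: "nat \<Rightarrow> nat set set" where
  "path_E n = {{i, i + 1} | i. 1 \<le> i \<and> i < n}"

end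

theory Submission
  imports Defs
begin

(* On the path a vertex v with label l dominates only v - l and v + l, so it dominates at
   most two vertices, and two only if 1 \<le> l and 2 l < n.  The labels of such vertices are
   distinct and lie in {1..(n - 1) div 2}, hence n \<le> |S| + (n - 1) div 2.  If 2 |S| \<le> n + 2,
   this count is tight: every label l \<le> (n - 1) div 2 sits on a vertex c whose two targets
   c - l and c + l are dominated by c alone.  The resulting pairs {c - l, c + l} are pairwise
   disjoint and have distinct centres, and a finite case analysis on the few largest labels
   shows that such a system of pairs only exists for n = 6 and n = 10.  For n = 4 the vertex
   labelled 0 leaves no room to dominate the centre of the pair of label 1. *)

lemma path_E_edge: "{a, b} \<in> path_E n \<Longrightarrow> b = a + 1 \<or> a = b + 1"
  unfolding path_E_def by (auto simp: doubleton_eq_iff)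

lemma walk_of_length_path_ge:
  assumes "walk_of_length (path_E n) k u v"
  shows "nat \<bar>int u - int v\<bar> \<le> k"
proof -
  obtain p where p: "p 0 = u" "p k = v" "\<forall>i<k. {p i, p (Suc i)} \<in> path_E n"
    using assms unfolding walk_of_length_def by blast
  have "nat \<bar>int u - int (p i)\<bar> \<le> i" if "i \<le> k" for i
    using that
  proof (induction i)
    case 0
    then show ?case using p by simp
  next
    case (Suc i)
    then have "{p i, p (Suc i)} \<in> path_E n" using p by simp
    then have "p (Suc i) = p i + 1 \<or> p i = p (Suc i) + 1" by (rule path_E_edge)
    with Suc show ?case by auto
  qed
  then show ?thesis using p by auto
qed

lemma walk_of_length_path:
  assumes "u \<in> {1..n}" "v \<in> {1..n}"
  shows "walk_of_length (path_E n) (nat \<bar>int u - int v\<bar>) u v"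
proof (cases "u \<le> v")
  case True
  have "{u + i, Suc (u + i)} \<in> path_E n" if "i < nat \<bar>int u - int v\<bar>" for i
    using that True assms unfolding path_E_def by auto
  then show ?thesis unfolding walk_of_length_def
    by (intro exI[of _ "\<lambda>i. u + i"]) (use True in auto)
next
  case False
  have "{u - i, u - Suc i} \<in> path_E n" if "i < nat \<bar>int u - int v\<bar>" for i
  proof -
    have "1 \<le> u - Suc i \<and> u - Suc i < n \<and> u - i = u - Suc i + 1"
      using that False assms by auto
    then show ?thesis unfolding path_E_def by (auto intro!: exI[of _ "u - Suc i"])
  qed
  then show ?thesis unfolding walk_of_length_def
    by (intro exI[of _ "\<lambda>i. u - i"]) (use False in auto)
qed

lemma gdist_path:
  assumes "u \<in> {1..n}" "v \<in> {1..n}"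
  shows "gdist (path_E n) u v = enat (nat \<bar>int u - int v\<bar>)"
  unfolding gdist_def
proof (rule antisym)
  show "(INF k\<in>{k. walk_of_length (path_E n) k u v}. enat k) \<le> enat (nat \<bar>int u - int v\<bar>)"
    by (rule INF_lower2[of "nat \<bar>int u - int v\<bar>"]) (use walk_of_length_path[OF assms] in auto)
  show "enat (nat \<bar>int u - int v\<bar>) \<le> (INF k\<in>{k. walk_of_length (path_E n) k u v}. enat k)"
    by (rule INF_greatest) (use walk_of_length_path_ge in auto)
qed

lemma dominates_path_iff:
  assumes "u \<in> {1..n}" "v \<in> {1..n}"
  shows "dominates (path_E n) v l u \<longleftrightarrow> u + l = v \<or> u = v + l"
  unfolding dominates_def gdist_path[OF assms] by auto

definition path_dom_set :: "nat \<Rightarrow> nat set \<Rightarrow> (nat \<Rightarrow> nat) \<Rightarrow> bool" where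
  "path_dom_set n S lam \<longleftrightarrow> S \<subseteq> {1..n} \<and> inj_on lam S \<and>
     (\<forall>u\<in>{1..n}. \<exists>v\<in>S. u + lam v = v \<or> u = v + lam v) \<and> (\<exists>v\<in>S. lam v = 0)"

lemma ext_irr_dom_set_path_iff:
  "ext_irr_dom_set (path_V n) (path_E n) S lam \<longleftrightarrow> path_dom_set n S lam"
proof (cases "S \<subseteq> {1..n}")
  case True
  then have "dominates (path_E n) v (lam v) u \<longleftrightarrow> u + lam v = v \<or> u = v + lam v"
    if "u \<in> {1..n}" "v \<in> S" for u v
    using dominates_path_iff that by blast
  then show ?thesis
    unfolding ext_irr_dom_set_def path_dom_set_def path_V_def using True by metis
next
  case False
  then show ?thesis unfolding ext_irr_dom_set_def path_dom_set_def path_V_def by blast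
qed

lemma path_dom_set_grow:
  assumes dom: "path_dom_set n S lam" and bound: "\<forall>v\<in>S. lam v \<le> n"
    and w: "w \<in> S" "lam w = w"
  defines "lam' \<equiv> \<lambda>x. if x = 1 then n + 1 else if x = n + 2 then n + 2 else lam (x - 1)"
  shows "path_dom_set (n + 2) (insert 1 (insert (n + 2) (Suc ` S))) lam'"
proof -
  have S: "S \<subseteq> {1..n}" and inj: "inj_on lam S" and zero: "\<exists>v\<in>S. lam v = 0"
    and cover: "\<forall>u\<in>{1..n}. \<exists>v\<in>S. u + lam v = v \<or> u = v + lam v"
    using dom unfolding path_dom_set_def by auto
  have lam'_Suc: "lam' (Suc v) = lam v" if "v \<in> S" for v
    using that S unfolding lam'_def by auto
  have "inj_on lam' (Suc ` S)"
    using inj by (intro inj_on_imageI) (auto simp: inj_on_def lam'_Suc)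
  moreover have "n + 1 \<notin> lam' ` Suc ` S" "n + 2 \<notin> lam' ` Suc ` S"
    using bound by (auto simp: lam'_Suc)
  ultimately have inj': "inj_on lam' (insert 1 (insert (n + 2) (Suc ` S)))"
    by (auto simp: lam'_def)
  have cover': "\<exists>v\<in>insert 1 (insert (n + 2) (Suc ` S)). u + lam' v = v \<or> u = v + lam' v"
    if u: "u \<in> {1..n + 2}" for u
  proof -
    consider "u = 1" | "u = n + 2" | "u - 1 \<in> {1..n}" using u by fastforce
    then show ?thesis
    proof cases
      case 1
      then show ?thesis using w lam'_Suc[OF w(1)] by (intro bexI[of _ "Suc w"]) auto
    next
      case 2
      then show ?thesis by (intro bexI[of _ 1]) (auto simp: lam'_def)
    next
      case 3
      then obtain v where "v \<in> S" "u - 1 + lam v = v \<or> u - 1 = v + lam v"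
        using cover by blast
      then show ?thesis using u lam'_Suc by (intro bexI[of _ "Suc v"]) auto
    qed
  qed
  have "\<exists>v\<in>insert 1 (insert (n + 2) (Suc ` S)). lam' v = 0"
  proof -
    obtain z where "z \<in> S" "lam z = 0" using zero by blast
    then show ?thesis using lam'_Suc by (intro bexI[of _ "Suc z"]) auto
  qed
  then show ?thesis
    unfolding path_dom_set_def using S inj' cover' by auto
qed

lemma path_dom_set_exists:
  assumes "4 \<le> n"
  shows "\<exists>S lam. path_dom_set n S lam"
proof -
  \<comment> \<open>A vertex w labelled w dominates the virtual vertex 0; once the path is shifted by one,
    it dominates the new end vertex 1.  In the step, the new vertex n + 2 labelled n + 2
    dominates nothing and only serves as the next such witness.\<close>
  have "\<exists>S lam. path_dom_set n S lam \<and> (\<forall>v\<in>S. lam v \<le> n) \<and> (\<exists>w\<in>S. lam w = w)"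
    using assms
  proof (induction n rule: less_induct)
    case (less n)
    consider "n = 4" | "n = 5" | "6 \<le> n" using less.prems by linarith
    then show ?case
    proof cases
      case 1
      let ?lam = "\<lambda>x::nat. if x = 1 then 1 else if x = 2 then 2 else if x = 3 then 0 else 3"
      have "{1..4::nat} = {1, 2, 3, 4}" by auto
      then have "path_dom_set 4 {1, 2, 3, 4} ?lam"
        unfolding path_dom_set_def by (auto simp: inj_on_def)
      then show ?thesis using 1 by (intro exI[of _ "{1, 2, 3, 4}"] exI[of _ ?lam]) auto
    next
      case 2
      let ?lam = "\<lambda>x::nat. if x = 1 then 0 else if x = 2 then 2 else if x = 4 then 1 else 3"
      have "{1..5::nat} = {1, 2, 3, 4, 5}" by auto
      then have "path_dom_set 5 {1, 2, 4, 5} ?lam"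
        unfolding path_dom_set_def by (auto simp: inj_on_def)
      then show ?thesis using 2 by (intro exI[of _ "{1, 2, 4, 5}"] exI[of _ ?lam]) auto
    next
      case 3
      then obtain m where n: "n = m + 2" and m: "4 \<le> m"
        by (intro that[of "n - 2"]) auto
      have "\<exists>S lam. path_dom_set m S lam \<and> (\<forall>v\<in>S. lam v \<le> m) \<and> (\<exists>w\<in>S. lam w = w)"
        using less.IH[of m] n m by simp
      then obtain S lam w where IH: "path_dom_set m S lam" "\<forall>v\<in>S. lam v \<le> m"
        "w \<in> S" "lam w = w"
        by blast
      let ?S' = "insert 1 (insert (m + 2) (Suc ` S))"
      let ?lam' = "\<lambda>x. if x = 1 then m + 1 else if x = m + 2 then m + 2 else lam (x - 1)"
      have "path_dom_set (m + 2) ?S' ?lam'"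
        by (rule path_dom_set_grow[OF IH])
      moreover have "\<forall>v\<in>?S'. ?lam' v \<le> m + 2"
        using IH(2) by auto
      moreover have "\<exists>w\<in>?S'. ?lam' w = w"
        by (intro bexI[of _ "m + 2"]) auto
      ultimately show ?thesis
        unfolding n by blast
    qed
  qed
  then show ?thesis by blast
qed

lemma gamma_e_path_attained:
  assumes "4 \<le> n"
  obtains S lam where "path_dom_set n S lam" "card S = gamma_e (path_V n) (path_E n)"
proof -
  have "\<exists>S lam. ext_irr_dom_set (path_V n) (path_E n) S lam \<and> card S = gamma_e (path_V n) (path_E n)"
    unfolding gamma_e_def
    by (rule LeastI_ex) (use path_dom_set_exists[OF assms] in \<open>auto simp: ext_irr_dom_set_path_iff\<close>)
  then show thesis using that by (auto simp: ext_irr_dom_set_path_iff)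
qed

lemma card_path_sphere_le:
  fixes n l v :: nat
  shows "card {u \<in> {1..n}. u + l = v \<or> u = v + l} \<le> (if 1 \<le> l \<and> 2 * l < n then 2 else 1)"
    (is "card ?A \<le> _")
proof (cases "1 \<le> l \<and> 2 * l < n")
  case True
  have "?A \<subseteq> {v - l, v + l}" by auto
  then have "card ?A \<le> card {v - l, v + l}"
    by (intro card_mono) auto
  also have "\<dots> \<le> 2" by (simp add: card_insert_if)
  finally show ?thesis using True by simp
next
  case False
  have "card ?A \<le> Suc 0"
  proof (subst card_le_Suc0_iff_eq)
    show "finite ?A" by simp
    show "\<forall>x\<in>?A. \<forall>y\<in>?A. x = y" using False by auto
  qed
  then show ?thesis using False by simp
qed

lemma small_cover_label_pairs:
  assumes S: "S \<subseteq> {1..n}" and inj: "inj_on lam S"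
    and f: "\<forall>u\<in>{1..n}. f u \<in> S \<and> (u + lam (f u) = f u \<or> u = f u + lam (f u))"
    and small: "card S + (n - 1) div 2 \<le> n"
  shows "\<forall>l\<in>{1..(n - 1) div 2}. \<exists>c\<in>S. lam c = l \<and> l < c \<and> c + l \<le> n \<and> f (c - l) = c \<and> f (c + l) = c"
    and "\<forall>v\<in>S. lam v = 0 \<longrightarrow> f v = v"
proof -
  define h where "h = (n - 1) div 2"
  define F where "F v = {u \<in> {1..n}. f u = v}" for v
  define D where "D = {v \<in> S. 1 \<le> lam v \<and> 2 * lam v < n}"
  define w :: "nat \<Rightarrow> nat" where "w v = 1 + of_bool (v \<in> D)" for v
  have fin: "finite S" using S finite_subset by blast
  have F_sphere: "F v \<subseteq> {u \<in> {1..n}. u + lam v = v \<or> u = v + lam v}" for v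
    unfolding F_def using f by auto
  have card_F: "card (F v) \<le> w v" if "v \<in> S" for v
  proof -
    have "card (F v) \<le> card {u \<in> {1..n}. u + lam v = v \<or> u = v + lam v}"
      using F_sphere by (intro card_mono) auto
    then show ?thesis using card_path_sphere_le[of n "lam v" v] that by (auto simp: w_def D_def)
  qed
  have "(\<Sum>v\<in>S. card (F v)) = card (\<Union>v\<in>S. F v)"
    using fin by (intro card_UN_disjoint[symmetric]) (auto simp: F_def)
  also have "(\<Union>v\<in>S. F v) = {1..n}"
    using f unfolding F_def by auto
  finally have sum_F: "(\<Sum>v\<in>S. card (F v)) = n" by simp
  have "S \<inter> {v. v \<in> D} = D" unfolding D_def by auto
  then have sum_w: "(\<Sum>v\<in>S. w v) = card S + card D"
    using fin unfolding w_def sum.distrib by simp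
  have lam_D_sub: "lam ` D \<subseteq> {1..h}"
    unfolding D_def h_def by auto
  have inj_D: "inj_on lam D"
    using inj by (rule inj_on_subset) (auto simp: D_def)
  have "card D \<le> h"
    using card_mono[OF _ lam_D_sub] card_image[OF inj_D] by simp
  moreover have "(\<Sum>v\<in>S. card (F v)) \<le> (\<Sum>v\<in>S. w v)"
    using card_F by (intro sum_mono)
  \<comment> \<open>n \<le> |S| + |D| \<le> |S| + h \<le> n, so both inequalities are equalities\<close>
  ultimately have "card D = h" and sum_eq: "(\<Sum>v\<in>S. card (F v)) = (\<Sum>v\<in>S. w v)"
    using sum_F sum_w small unfolding h_def[symmetric] by linarith+
  then have lam_D: "lam ` D = {1..h}"
    using lam_D_sub card_image[OF inj_D] by (intro card_subset_eq) auto
  have card_F_eq: "card (F v) = w v" if "v \<in> S" for v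
    using sum_mono_inv[OF sum_eq] card_F that fin by blast
  show "\<forall>l\<in>{1..(n - 1) div 2}. \<exists>c\<in>S. lam c = l \<and> l < c \<and> c + l \<le> n \<and> f (c - l) = c \<and> f (c + l) = c"
  proof
    fix l assume "l \<in> {1..(n - 1) div 2}"
    then have "l \<in> lam ` D" using lam_D unfolding h_def by simp
    then obtain c where c: "c \<in> D" "lam c = l" by blast
    have "F c \<subseteq> {c - l, c + l}" using F_sphere[of c] c by auto
    moreover have "card {c - l, c + l} \<le> card (F c)"
      using card_F_eq[of c] c by (auto simp: w_def D_def card_insert_if)
    ultimately have "F c = {c - l, c + l}" by (intro card_seteq) auto
    then have "c - l \<in> F c" "c + l \<in> F c" by auto
    then show "\<exists>c\<in>S. lam c = l \<and> l < c \<and> c + l \<le> n \<and> f (c - l) = c \<and> f (c + l) = c"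
      using c unfolding F_def D_def by (intro bexI[of _ c]) auto
  qed
  show "\<forall>v\<in>S. lam v = 0 \<longrightarrow> f v = v"
  proof (intro ballI impI)
    fix v assume v: "v \<in> S" "lam v = 0"
    then have "card (F v) = 1" using card_F_eq by (simp add: w_def D_def)
    moreover have "F v \<subseteq> {v}" using F_sphere[of v] v by auto
    ultimately have "F v = {v}" by (intro card_seteq) auto
    then have "v \<in> F v" by simp
    then show "f v = v" unfolding F_def by simp
  qed
qed

definition centred_pairs :: "int \<Rightarrow> nat set \<Rightarrow> (nat \<Rightarrow> int) \<Rightarrow> bool" where
  "centred_pairs n L c \<longleftrightarrow>
     (\<forall>l\<in>L. 1 \<le> c l - int l \<and> c l + int l \<le> n) \<and>
     (\<forall>l\<in>L. \<forall>l'\<in>L. l \<noteq> l' \<longrightarrow> c l \<noteq> c l' \<and>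
        c l - int l \<noteq> c l' - int l' \<and> c l - int l \<noteq> c l' + int l' \<and> c l + int l \<noteq> c l' + int l')"

lemma centred_pairs_subset: "centred_pairs n L c \<Longrightarrow> L' \<subseteq> L \<Longrightarrow> centred_pairs n L' c"
  unfolding centred_pairs_def by blast

lemma centred_pairs_of_choice:
  fixes C f :: "nat \<Rightarrow> nat"
  assumes ends: "\<forall>l\<in>L. l < C l \<and> C l + l \<le> n \<and> f (C l - l) = C l \<and> f (C l + l) = C l"
    and inj: "inj_on C L"
  shows "centred_pairs (int n) L (\<lambda>l. int (C l))"
  unfolding centred_pairs_def
proof (intro conjI ballI impI)
  fix l assume "l \<in> L"
  then have "l < C l" "C l + l \<le> n" using ends by blast+
  then show "1 \<le> int (C l) - int l" "int (C l) + int l \<le> int n" by linarith+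
next
  fix l l' assume l: "l \<in> L" and l': "l' \<in> L" and "l \<noteq> l'"
  then have "C l \<noteq> C l'" using inj by (auto dest: inj_onD)
  have lt: "l < C l" "l' < C l'"
    and f: "f (C l - l) = C l" "f (C l + l) = C l" "f (C l' - l') = C l'" "f (C l' + l') = C l'"
    using ends l l' by auto
  \<comment> \<open>f sends both ends of a pair to its centre, so ends of distinct pairs differ\<close>
  have ne: "C l - l \<noteq> C l' - l'" "C l - l \<noteq> C l' + l'" "C l + l \<noteq> C l' + l'"
    using f \<open>C l \<noteq> C l'\<close> by metis+
  show "int (C l) \<noteq> int (C l')" using \<open>C l \<noteq> C l'\<close> by simp
  show "int (C l) - int l \<noteq> int (C l') - int l'" using ne(1) lt by linarith
  show "int (C l) - int l \<noteq> int (C l') + int l'" using ne(2) lt by linarith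
  show "int (C l) + int l \<noteq> int (C l') + int l'" using ne(3) by linarith
qed

text \<open>Already the largest labels admit no such pairs: two of them for odd n, all of them for
  n = 8, 12, 14, and the seven largest for even n \<ge> 16, uniformly in n.\<close>

lemma not_centred_pairs_odd: "\<not> centred_pairs (2 * int k + 5) {k + 1, k + 2} c"
  unfolding centred_pairs_def ball_simps by (simp add: algebra_simps) (smt (z3))

lemma not_centred_pairs_8: "\<not> centred_pairs 8 {1, 2, 3} c"
  unfolding centred_pairs_def ball_simps by simp (smt (z3))

lemma not_centred_pairs_12: "\<not> centred_pairs 12 {1, 2, 3, 4, 5} c"
  unfolding centred_pairs_def ball_simps by simp (smt (z3))

lemma not_centred_pairs_14: "\<not> centred_pairs 14 {1, 2, 3, 4, 5, 6} c"
  unfolding centred_pairs_def ball_simps by simp (smt (z3))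

lemma not_centred_pairs_even:
  "\<not> centred_pairs (2 * int k + 16) {k + 1, k + 2, k + 3, k + 4, k + 5, k + 6, k + 7} c"
  unfolding centred_pairs_def ball_simps by (simp add: algebra_simps) (smt (z3))

lemma centred_pairs_only_6_10:
  assumes pairs: "centred_pairs (int n) {1..(n - 1) div 2} c" and "5 \<le> n"
  shows "n = 6 \<or> n = 10"
proof (rule ccontr)
  assume n: "\<not> (n = 6 \<or> n = 10)"
  have sub: "centred_pairs (int n) L c" if "L \<subseteq> {1..(n - 1) div 2}" for L
    using centred_pairs_subset[OF pairs that] .
  have "odd n \<or> n = 8 \<or> n = 12 \<or> n = 14 \<or> (even n \<and> 16 \<le> n)"
    using \<open>5 \<le> n\<close> n by presburger
  then consider "odd n" | "n = 8" | "n = 12" | "n = 14" | "even n" "16 \<le> n"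
    by blast
  then show False
  proof cases
    case 1
    then have "n = 2 * ((n - 5) div 2) + 5" using \<open>5 \<le> n\<close> by presburger
    then obtain k where k: "n = 2 * k + 5" by blast
    show False using sub[of "{k + 1, k + 2}"] not_centred_pairs_odd[of k c] k by simp
  next
    case 2
    show False using sub[of "{1, 2, 3}"] not_centred_pairs_8[of c] 2 by auto
  next
    case 3
    show False using sub[of "{1, 2, 3, 4, 5}"] not_centred_pairs_12[of c] 3 by auto
  next
    case 4
    show False using sub[of "{1, 2, 3, 4, 5, 6}"] not_centred_pairs_14[of c] 4 by auto
  next
    case 5
    then have "n = 2 * ((n - 16) div 2) + 16" by presburger
    then obtain k where k: "n = 2 * k + 16" by blast
    show False
      using sub[of "{k + 1, k + 2, k + 3, k + 4, k + 5, k + 6, k + 7}"] not_centred_pairs_even[of k c] k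
      by simp
  qed
qed

lemma no_small_cover_path4:
  fixes S :: "nat set" and c z :: nat
  assumes S: "S \<subseteq> {1..4}" and inj: "inj_on lam S"
    and f: "\<forall>u\<in>{1..4}. f u \<in> S \<and> (u + lam (f u) = f u \<or> u = f u + lam (f u))"
    and c: "c \<in> S" "lam c = 1" "1 < c" "c + 1 \<le> 4" "f (c - 1) = c" "f (c + 1) = c"
    and z: "z \<in> S" "lam z = 0" "f z = z"
  shows False
proof -
  define y where "y = f c"
  have y: "y \<in> S" "c + lam y = y \<or> c = y + lam y"
    using f c unfolding y_def by auto
  have "lam y \<noteq> 0"
  proof
    assume "lam y = 0"
    with y(2) have "y = c" by simp
    with \<open>lam y = 0\<close> c(2) show False by simp
  qed
  moreover have "lam y \<noteq> 1"
  proof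
    assume "lam y = 1"
    then have "y = c" using inj_onD[OF inj _ y(1) c(1)] c(2) by simp
    with y(2) \<open>lam y = 1\<close> show False by simp
  qed
  ultimately have "y \<notin> {c - 1, c, c + 1}" using y by auto
  moreover have "z \<notin> {c - 1, c, c + 1}" using z c by auto
  moreover have "y \<in> {1..4}" "z \<in> {1..4}" using y(1) z(1) S by auto
  \<comment> \<open>{1..4} has only one vertex outside {c - 1, c, c + 1}\<close>
  ultimately have "y = z" using c(3,4) by simp presburger
  then show False using \<open>lam y \<noteq> 0\<close> z by simp
qed

lemma path_dom_set_card_ge:
  assumes dom: "path_dom_set n S lam" and n: "4 \<le> n" "n \<noteq> 6" "n \<noteq> 10"
  shows "n + 3 \<le> 2 * card S"
proof (rule ccontr)
  assume "\<not> n + 3 \<le> 2 * card S"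
  then have small: "card S + (n - 1) div 2 \<le> n" using n(1) by presburger
  have S: "S \<subseteq> {1..n}" and inj: "inj_on lam S" and z: "\<exists>z\<in>S. lam z = 0"
    and cover: "\<forall>u\<in>{1..n}. \<exists>v\<in>S. u + lam v = v \<or> u = v + lam v"
    using dom unfolding path_dom_set_def by auto
  obtain f where f: "\<forall>u\<in>{1..n}. f u \<in> S \<and> (u + lam (f u) = f u \<or> u = f u + lam (f u))"
    using cover by metis
  note tight = small_cover_label_pairs[OF S inj f small]
  show False
  proof (cases "n = 4")
    case True
    obtain c where "c \<in> S" "lam c = 1" "1 < c" "c + 1 \<le> 4" "f (c - 1) = c" "f (c + 1) = c"
      using tight(1) True by auto
    moreover obtain z where "z \<in> S" "lam z = 0" using z by blast
    ultimately show False
      using no_small_cover_path4[of S lam f c z] tight(2) S inj f True by auto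
  next
    case False
    obtain C where C: "\<forall>l\<in>{1..(n - 1) div 2}. C l \<in> S \<and> lam (C l) = l \<and> l < C l \<and> C l + l \<le> n
        \<and> f (C l - l) = C l \<and> f (C l + l) = C l"
      using tight(1) by metis
    have "inj_on C {1..(n - 1) div 2}"
      using C by (intro inj_onI) metis
    then have "centred_pairs (int n) {1..(n - 1) div 2} (\<lambda>l. int (C l))"
      using C by (intro centred_pairs_of_choice) auto
    then have "n = 6 \<or> n = 10" using n(1) False by (intro centred_pairs_only_6_10) auto
    with n show False by simp
  qed
qed

theorem corollary5p8:
  fixes n :: nat
  assumes "n \<ge> 4" and "n \<noteq> 6" and "n \<noteq> 10"
  shows "of_nat (gamma_e (path_V n) (path_E n)) \<ge> \<lceil>(real n + 3) / 2\<rceil>"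
proof -
  obtain S lam where S: "path_dom_set n S lam" and card: "card S = gamma_e (path_V n) (path_E n)"
    using gamma_e_path_attained assms(1) by blast
  have "n + 3 \<le> 2 * card S"
    using path_dom_set_card_ge[OF S assms] .
  then have "(real n + 3) / 2 \<le> real (gamma_e (path_V n) (path_E n))"
    using card by simp
  then show ?thesis by (simp add: ceiling_le_iff)
qed

end
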